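(* For every integer $d\ge 1$, every $d$-regular graph $G$ has a canonical path partition.
   Context: All graphs are finite, simple and undirected. A path partition of a graph $G=(V,E)$ is a set of vertex-disjoint paths of $G$ (a single vertex is allowed as a path) whose vertex sets together cover $V$; its members are called components. A component with $t\ge 3$ vertices is a cycle component if the subgraph of $G$ induced on its vertex set has a spanning cycle; a component consisting of one vertex is an isolated vertex; every other component is a path component. A path partition of $G$ is canonical if (1) it has the minimum number of components among all path partitions of $G$; (2) among path partitions satisfying (1), it has the maximum number of cycle components; and (3) it has no isolated vertices. *)

theory Defs
  imports Main
begin

definition simple_graph :: "'a set \<Rightarrow> ('a \<Rightarrow> 'a \<Rightarrow> bool) \<Rightarrow> bool" where
  "simple_graph V E \<longleftrightarrow> finite V \<and> (\<forall>x y. E x y \<longrightarrow> E y x) \<and> (\<forall>x. \<not> E x x)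
     \<and> (\<forall>x y. E x y \<longrightarrow> x \<in> V \<and> y \<in> V)"

definition regular :: "'a set \<Rightarrow> ('a \<Rightarrow> 'a \<Rightarrow> bool) \<Rightarrow> nat \<Rightarrow> bool" where
  "regular V E d \<longleftrightarrow> (\<forall>v\<in>V. card {u\<in>V. E v u} = d)"

definition is_path :: "'a set \<Rightarrow> ('a \<Rightarrow> 'a \<Rightarrow> bool) \<Rightarrow> 'a list \<Rightarrow> bool" where
  "is_path V E p \<longleftrightarrow> p \<noteq> [] \<and> distinct p \<and> set p \<subseteq> V
     \<and> (\<forall>i. Suc i < length p \<longrightarrow> E (p ! i) (p ! Suc i))"

definition path_partition :: "'a set \<Rightarrow> ('a \<Rightarrow> 'a \<Rightarrow> bool) \<Rightarrow> 'a list set \<Rightarrow> bool" where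
  "path_partition V E P \<longleftrightarrow> (\<forall>p\<in>P. is_path V E p)
     \<and> (\<forall>p\<in>P. \<forall>q\<in>P. p \<noteq> q \<longrightarrow> set p \<inter> set q = {})
     \<and> (\<Union>p\<in>P. set p) = V"

definition has_spanning_cycle :: "('a \<Rightarrow> 'a \<Rightarrow> bool) \<Rightarrow> 'a set \<Rightarrow> bool" where
  "has_spanning_cycle E S \<longleftrightarrow> (\<exists>c. distinct c \<and> set c = S \<and> 3 \<le> length c
     \<and> (\<forall>i. Suc i < length c \<longrightarrow> E (c ! i) (c ! Suc i))
     \<and> E (last c) (hd c))"

definition cycle_component :: "('a \<Rightarrow> 'a \<Rightarrow> bool) \<Rightarrow> 'a list \<Rightarrow> bool" where
  "cycle_component E p \<longleftrightarrow> 3 \<le> length p \<and> has_spanning_cycle E (set p)"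

definition isolated_vertex :: "'a list \<Rightarrow> bool" where
  "isolated_vertex p \<longleftrightarrow> length p = 1"

definition num_cycle_components :: "('a \<Rightarrow> 'a \<Rightarrow> bool) \<Rightarrow> 'a list set \<Rightarrow> nat" where
  "num_cycle_components E P = card {p\<in>P. cycle_component E p}"

definition canonical_path_partition :: "'a set \<Rightarrow> ('a \<Rightarrow> 'a \<Rightarrow> bool) \<Rightarrow> 'a list set \<Rightarrow> bool" where
  "canonical_path_partition V E P \<longleftrightarrow>
     path_partition V E P
     \<and> (\<forall>Q. path_partition V E Q \<longrightarrow> card P \<le> card Q)
     \<and> (\<forall>Q. path_partition V E Q \<and> card Q = card P
            \<longrightarrow> num_cycle_components E Q \<le> num_cycle_components E P)
     \<and> (\<forall>p\<in>P. \<not> isolated_vertex p)"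

end

theory Submission
  imports Defs
begin

text \<open>Take a path partition P that is lexicographically optimal: fewest components, then most
cycle components, then fewest isolated vertices; it suffices to show that P has no isolated
vertex. Optimality forces every neighbour u of an isolated vertex [z] to be the middle of a
component [a, u, b] with a, b non-adjacent: otherwise z could be absorbed into the component
of u, or that component could be split into two paths on at least two vertices each. Replacing
[z] and [a, u, b] by [a] and [z, u, b] (or [b] and [z, u, a]) preserves optimality, so
isolatedness spreads from z to a and b. Let Y be the set of vertices reached in this way and N
the set of their neighbours. Every u in N is the middle of a component [a, u, b] of P with
a, b in Y, so |Y| \<ge> 1 + 2|N|; but counting edges between Y and N in a d-regular graph
gives d|Y| \<le> d|N|.\<close>

lemma is_path_iff_successively:
  "is_path V E p \<longleftrightarrow> p \<noteq> [] \<and> distinct p \<and> set p \<subseteq> V \<and> successively E p"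
  unfolding is_path_def successively_conv_nth by blast

lemma path_partition_finite:
  assumes "path_partition V E Q" "finite V"
  shows "finite Q"
proof (rule finite_subset)
  show "Q \<subseteq> {xs. set xs \<subseteq> V \<and> length xs \<le> card V}"
  proof
    fix p assume "p \<in> Q"
    then have "set p \<subseteq> V" "distinct p"
      using assms(1) unfolding path_partition_def is_path_def by auto
    then show "p \<in> {xs. set xs \<subseteq> V \<and> length xs \<le> card V}"
      using card_mono[OF assms(2), of "set p"] distinct_card[of p] by auto
  qed
  show "finite {xs. set xs \<subseteq> V \<and> length xs \<le> card V}"
    using finite_lists_length_le[OF assms(2)] by simp
qed

lemma path_partition_component_eq:
  "path_partition V E Q \<Longrightarrow> p \<in> Q \<Longrightarrow> q \<in> Q \<Longrightarrow> x \<in> set p \<Longrightarrow> x \<in> set q \<Longrightarrow> p = q"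
  unfolding path_partition_def by blast

lemma path_partition_replace:
  assumes pp: "path_partition V E Q" and R: "R \<subseteq> Q"
    and S_paths: "\<forall>s\<in>S. is_path V E s"
    and S_disj: "\<forall>s\<in>S. \<forall>t\<in>S. s \<noteq> t \<longrightarrow> set s \<inter> set t = {}"
    and same_cover: "(\<Union>s\<in>S. set s) = (\<Union>r\<in>R. set r)"
  shows "path_partition V E ((Q - R) \<union> S)" "(Q - R) \<inter> S = {}"
proof -
  have Q_paths: "\<forall>p\<in>Q. is_path V E p"
    and Q_disj: "\<forall>p\<in>Q. \<forall>q\<in>Q. p \<noteq> q \<longrightarrow> set p \<inter> set q = {}"
    and Q_cover: "(\<Union>p\<in>Q. set p) = V"
    using pp unfolding path_partition_def by auto
  have disj: "set q \<inter> set s = {}" if "q \<in> Q - R" "s \<in> S" for q s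
  proof -
    have "set s \<subseteq> (\<Union>r\<in>R. set r)" using that(2) same_cover by blast
    moreover have "set q \<inter> set r = {}" if "r \<in> R" for r
    proof -
      have "q \<in> Q" "r \<in> Q" "q \<noteq> r" using \<open>q \<in> Q - R\<close> R that by auto
      then show ?thesis using Q_disj by blast
    qed
    ultimately show ?thesis by blast
  qed
  show "path_partition V E ((Q - R) \<union> S)"
    unfolding path_partition_def
  proof (intro conjI)
    show "\<forall>p\<in>Q - R \<union> S. is_path V E p"
      using Q_paths S_paths by blast
    show "\<forall>p\<in>Q - R \<union> S. \<forall>q\<in>Q - R \<union> S. p \<noteq> q \<longrightarrow> set p \<inter> set q = {}"
    proof (intro ballI impI)
      fix p q assume "p \<in> Q - R \<union> S" "q \<in> Q - R \<union> S" "p \<noteq> q"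
      then show "set p \<inter> set q = {}"
        using Q_disj S_disj disj[of p q] disj[of q p] by blast
    qed
    have "(\<Union>p\<in>(Q - R) \<union> S. set p) = (\<Union>p\<in>Q - R. set p) \<union> (\<Union>r\<in>R. set r)"
      using same_cover by simp
    also have "\<dots> = V" using Q_cover R by blast
    finally show "(\<Union>p\<in>Q - R \<union> S. set p) = V" .
  qed
  show "(Q - R) \<inter> S = {}"
  proof (rule equals0I)
    fix s assume "s \<in> (Q - R) \<inter> S"
    then have "set s = {}" using disj[of s s] by simp
    moreover have "is_path V E s" using S_paths \<open>s \<in> (Q - R) \<inter> S\<close> by blast
    ultimately show False unfolding is_path_def by simp
  qed
qed

lemma card_filter_replace:
  assumes "finite Q" "finite S" "R \<subseteq> Q" "(Q - R) \<inter> S = {}"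
  shows "card {p \<in> (Q - R) \<union> S. F p} + card {p \<in> R. F p}
       = card {p \<in> Q. F p} + card {p \<in> S. F p}"
proof -
  have fin: "finite (Q - R)" "finite R" using assms(1,3) finite_subset by auto
  have "{p \<in> (Q - R) \<union> S. F p} = {p \<in> Q - R. F p} \<union> {p \<in> S. F p}" by blast
  then have new: "card {p \<in> (Q - R) \<union> S. F p} = card {p \<in> Q - R. F p} + card {p \<in> S. F p}"
    using fin assms(2,4) by (simp add: card_Un_disjoint disjoint_iff)
  have "{p \<in> Q. F p} = {p \<in> Q - R. F p} \<union> {p \<in> R. F p}" using assms(3) by blast
  then have old: "card {p \<in> Q. F p} = card {p \<in> Q - R. F p} + card {p \<in> R. F p}"
    using fin by (simp add: card_Un_disjoint disjoint_iff)
  from new old show ?thesis by simp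
qed

lemma cycle_component_triple_iff:
  assumes sym: "\<forall>x y. E x y \<longrightarrow> E y x" and dist: "distinct [a, u, b]"
  shows "cycle_component E [a, u, b] \<longleftrightarrow> E a u \<and> E u b \<and> E a b"
proof
  assume "cycle_component E [a, u, b]"
  then obtain c where c: "distinct c" "set c = {a, u, b}" "successively E c" "E (last c) (hd c)"
    unfolding cycle_component_def has_spanning_cycle_def successively_conv_nth by auto
  have "length c = 3" using distinct_card[OF c(1)] c(2) dist by simp
  then obtain c0 c1 c2 where c_eq: "c = [c0, c1, c2]"
    by (auto simp: numeral_3_eq_3 length_Suc_conv)
  have "E x y" if "x \<in> set c" "y \<in> set c" "x \<noteq> y" for x y
    using that c(3,4) sym unfolding c_eq by auto
  then show "E a u \<and> E u b \<and> E a b" using c(2) dist by auto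
next
  assume "E a u \<and> E u b \<and> E a b"
  then show "cycle_component E [a, u, b]"
    using sym dist unfolding cycle_component_def has_spanning_cycle_def
    by (intro conjI exI[of _ "[a, u, b]"]) (auto simp: nth_Cons split: nat.split)
qed

lemma spanning_cycle_path_from:
  assumes "has_spanning_cycle E S" "u \<in> S"
  shows "\<exists>q. distinct (u # q) \<and> set (u # q) = S \<and> successively E (u # q)"
proof -
  obtain c where c: "distinct c" "set c = S" "successively E c" "E (last c) (hd c)"
    using assms(1) unfolding has_spanning_cycle_def successively_conv_nth by auto
  obtain c1 c2 where c_eq: "c = c1 @ u # c2" using split_list assms(2) c(2) by metis
  have "successively E c1" "successively E (u # c2)"
    using c(3) unfolding c_eq successively_append_iff by auto
  moreover have "c1 \<noteq> [] \<Longrightarrow> E (last (u # c2)) (hd c1)" using c(4) unfolding c_eq by simp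
  ultimately have "successively E ((u # c2) @ c1)" unfolding successively_append_iff by blast
  moreover have "distinct (u # c2 @ c1)" "set (u # c2 @ c1) = S"
    using c(1,2) unfolding c_eq by auto
  ultimately show ?thesis by (intro exI[of _ "c2 @ c1"]) simp
qed

lemma list_cases_by_length: "xs = [] \<or> (\<exists>a. xs = [a]) \<or> 2 \<le> length xs"
  by (cases xs rule: remdups_adj.cases) auto

lemma path_absorb_neighbour:
  assumes sym: "\<forall>x y. E x y \<longrightarrow> E y x"
    and p: "is_path V E p" "u \<in> set p" and v: "v \<in> V" "v \<notin> set p" "E v u"
  shows "(\<exists>q. is_path V E q \<and> set q = insert v (set p))
    \<or> (\<exists>q1 q2. is_path V E q1 \<and> is_path V E q2 \<and> set q1 \<inter> set q2 = {}
         \<and> set q1 \<union> set q2 = insert v (set p) \<and> 2 \<le> length q1 \<and> 2 \<le> length q2)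
    \<or> (\<exists>a b. p = [a, u, b])" (is "_ \<or> ?split \<or> _")
proof -
  obtain p1 p2 where p_eq: "p = p1 @ u # p2" using split_list[OF p(2)] by blast
  have dist: "distinct (p1 @ u # p2)" and inV: "set (p1 @ u # p2) \<subseteq> V"
    and succ: "successively E (p1 @ [u])" "successively E (u # p2)"
    using p(1) v unfolding p_eq is_path_iff_successively successively_append_iff
    by (auto simp: successively_Cons)
  have succ1: "successively E p1" and succ2: "successively E p2"
    using succ by (auto simp: successively_append_iff successively_Cons)
  have cons_v: "successively E (v # u # p2)" and snoc_v: "successively E (p1 @ [u, v])"
    using succ v(3) sym by (auto simp: successively_append_iff)
  have vp: "v \<notin> set p1" "v \<noteq> u" "v \<notin> set p2" using v(2) unfolding p_eq by auto
  consider "p1 = []" | "p2 = []" | "2 \<le> length p1" | "2 \<le> length p2"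
    | a b where "p1 = [a]" "p2 = [b]"
    using list_cases_by_length[of p1] list_cases_by_length[of p2] by blast
  then show ?thesis
  proof cases
    case 1
    then have "is_path V E (v # p)" using cons_v dist inV v vp
      unfolding p_eq is_path_iff_successively by auto
    then show ?thesis by auto
  next
    case 2
    then have "is_path V E (p @ [v])" using snoc_v dist inV v vp
      unfolding p_eq is_path_iff_successively by auto
    then show ?thesis by auto
  next
    case 3
    then have "is_path V E p1" "is_path V E (v # u # p2)"
      using succ1 cons_v dist inV v vp unfolding is_path_iff_successively by auto
    then have ?split using 3 dist vp unfolding p_eq
      by (intro exI[of _ p1] exI[of _ "v # u # p2"]) auto
    then show ?thesis by blast
  next
    case 4
    then have "is_path V E (p1 @ [u, v])" "is_path V E p2"
      using succ2 snoc_v dist inV v vp unfolding is_path_iff_successively by auto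
    then have ?split using 4 dist vp unfolding p_eq
      by (intro exI[of _ "p1 @ [u, v]"] exI[of _ p2]) auto
    then show ?thesis by blast
  next
    case 5
    then show ?thesis unfolding p_eq by simp
  qed
qed

lemma double_counting_le:
  assumes "finite A" "finite B"
    and "\<forall>a\<in>A. card {b \<in> B. R a b} = k" "\<forall>b\<in>B. card {a \<in> A. R a b} \<le> k"
  shows "k * card A \<le> k * card B"
proof -
  have "k * card A = (\<Sum>a\<in>A. card {b \<in> B. R a b})" using assms(3) by simp
  also have "\<dots> = (\<Sum>b\<in>B. card {a \<in> A. R a b})"
    unfolding card_eq_sum by (rule sum.swap_restrict[OF assms(1,2)])
  also have "\<dots> \<le> (\<Sum>b\<in>B. k)" using assms(4) by (intro sum_mono) blast
  finally show ?thesis by simp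
qed

lemma path_partition_card_singletons_middles_le:
  assumes pp: "path_partition V E P" and Y: "finite Y" "{y. [y] \<in> P} \<subseteq> Y"
    and N: "finite N" "\<forall>u\<in>N. \<exists>a b. [a, u, b] \<in> P \<and> a \<in> Y \<and> b \<in> Y"
  shows "card {y. [y] \<in> P} + 2 * card N \<le> card Y"
proof -
  obtain f g where fg: "\<forall>u\<in>N. [f u, u, g u] \<in> P \<and> f u \<in> Y \<and> g u \<in> Y"
    using N(2) by metis
  define ends where "ends u = {f u, g u}" for u
  have same: "p = q" if "p \<in> P" "q \<in> P" "x \<in> set p" "x \<in> set q" for p q x
    using path_partition_component_eq[OF pp that] .
  have "distinct [f u, u, g u]" if "u \<in> N" for u
    using fg that pp unfolding path_partition_def is_path_def by blast
  then have card_ends: "card (ends u) = 2" if "u \<in> N" for u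
    using that unfolding ends_def by auto
  have ends_disj: "ends u \<inter> ends u' = {}" if "u \<in> N" "u' \<in> N" "u \<noteq> u'" for u u'
    using that fg same[of "[f u, u, g u]" "[f u', u', g u']"] unfolding ends_def by auto
  have singletons_disj: "{y. [y] \<in> P} \<inter> (\<Union>u\<in>N. ends u) = {}"
  proof (rule equals0I)
    fix x assume "x \<in> {y. [y] \<in> P} \<inter> (\<Union>u\<in>N. ends u)"
    then obtain u where "[x] \<in> P" "u \<in> N" "x \<in> set [f u, u, g u]" unfolding ends_def by auto
    moreover have "[f u, u, g u] \<in> P" using fg \<open>u \<in> N\<close> by blast
    ultimately have "[x] = [f u, u, g u]" by (intro same[where x = x]) auto
    then show False by simp
  qed
  have fin_ends: "finite (\<Union>u\<in>N. ends u)" using N(1) unfolding ends_def by simp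
  have "card (\<Union>u\<in>N. ends u) = 2 * card N"
    using card_UN_disjoint[OF N(1), of ends] card_ends ends_disj unfolding ends_def by simp
  moreover have "card ({y. [y] \<in> P} \<union> (\<Union>u\<in>N. ends u)) \<le> card Y"
    using fg Y unfolding ends_def by (intro card_mono) auto
  ultimately show ?thesis
    using card_Un_disjoint[OF finite_subset[OF Y(2,1)] fin_ends singletons_disj] by simp
qed

locale sgraph =
  fixes V :: "'a set" and E :: "'a \<Rightarrow> 'a \<Rightarrow> bool"
  assumes simple: "simple_graph V E"
begin

lemma finite_V: "finite V"
  and sym: "\<forall>x y. E x y \<longrightarrow> E y x"
  and irrefl: "\<not> E x x"
  and edge_in_V: "E x y \<Longrightarrow> x \<in> V \<and> y \<in> V"
  using simple unfolding simple_graph_def by blast+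

definition min_partition :: "'a list set \<Rightarrow> bool" where
  "min_partition Q \<longleftrightarrow> path_partition V E Q \<and> (\<forall>Q'. path_partition V E Q' \<longrightarrow> card Q \<le> card Q')"

definition max_cycle_partition :: "'a list set \<Rightarrow> bool" where
  "max_cycle_partition Q \<longleftrightarrow> min_partition Q
     \<and> (\<forall>Q'. min_partition Q' \<longrightarrow> num_cycle_components E Q' \<le> num_cycle_components E Q)"

definition num_isolated :: "'a list set \<Rightarrow> nat" where
  "num_isolated Q = card {p \<in> Q. isolated_vertex p}"

text \<open>Condition (3) of canonicity is relaxed to minimising the number of isolated vertices;
the main work is to show that the minimum is zero.\<close>

definition optimal_partition :: "'a list set \<Rightarrow> bool" where
  "optimal_partition Q \<longleftrightarrow> max_cycle_partition Q
     \<and> (\<forall>Q'. max_cycle_partition Q' \<longrightarrow> num_isolated Q \<le> num_isolated Q')"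

lemma optimal_partition_path_partition: "optimal_partition Q \<Longrightarrow> path_partition V E Q"
  unfolding optimal_partition_def max_cycle_partition_def min_partition_def by blast

lemma optimal_partition_canonical:
  assumes "optimal_partition P" "\<forall>p\<in>P. \<not> isolated_vertex p"
  shows "canonical_path_partition V E P"
  using assms unfolding canonical_path_partition_def optimal_partition_def max_cycle_partition_def
    min_partition_def by auto

lemma ex_optimal_partition: "\<exists>P. optimal_partition P"
proof -
  have "path_partition V E ((\<lambda>v. [v]) ` V)"
    unfolding path_partition_def is_path_def by auto
  then obtain Q1 where "min_partition Q1"
    unfolding min_partition_def using ex_has_least_nat[of "path_partition V E" _ card] by blast
  moreover have "num_cycle_components E Q < Suc (card V)" if "min_partition Q" for Q
  proof -
    have "num_cycle_components E Q \<le> card Q"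
      using that path_partition_finite[OF _ finite_V] unfolding min_partition_def num_cycle_components_def
      by (intro card_mono) auto
    also have "\<dots> \<le> card ((\<lambda>v. [v]) ` V)"
      using that \<open>path_partition V E ((\<lambda>v. [v]) ` V)\<close> unfolding min_partition_def by blast
    also have "\<dots> \<le> card V" by (rule card_image_le[OF finite_V])
    finally show ?thesis by simp
  qed
  ultimately obtain Q2 where "max_cycle_partition Q2"
    unfolding max_cycle_partition_def
    using ex_has_greatest_nat[of min_partition Q1 "num_cycle_components E"] by blast
  then show ?thesis
    unfolding optimal_partition_def using ex_has_least_nat[of max_cycle_partition Q2 num_isolated] by blast
qed

lemma replace_components:
  assumes pp: "path_partition V E Q" and R: "R \<subseteq> Q" and fin_S: "finite S"
    and S_paths: "\<forall>s\<in>S. is_path V E s"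
    and S_disj: "\<forall>s\<in>S. \<forall>t\<in>S. s \<noteq> t \<longrightarrow> set s \<inter> set t = {}"
    and same_cover: "(\<Union>s\<in>S. set s) = (\<Union>r\<in>R. set r)"
  shows "path_partition V E ((Q - R) \<union> S)"
    and "card ((Q - R) \<union> S) + card R = card Q + card S"
    and "card {p \<in> (Q - R) \<union> S. F p} + card {p \<in> R. F p} = card {p \<in> Q. F p} + card {p \<in> S. F p}"
proof -
  have disj: "(Q - R) \<inter> S = {}" by (rule path_partition_replace(2)[OF assms(1,2,4-6)])
  show "path_partition V E ((Q - R) \<union> S)" by (rule path_partition_replace(1)[OF assms(1,2,4-6)])
  show count: "card {p \<in> (Q - R) \<union> S. F p} + card {p \<in> R. F p}
      = card {p \<in> Q. F p} + card {p \<in> S. F p}" for F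
    by (rule card_filter_replace[OF path_partition_finite[OF pp finite_V] fin_S R disj])
  show "card ((Q - R) \<union> S) + card R = card Q + card S"
    using count[of "\<lambda>_. True"] by (simp only: simp_thms Collect_mem_eq)
qed

lemma min_partition_no_merge:
  assumes min: "min_partition Q" and pq: "p \<in> Q" "q \<in> Q" "p \<noteq> q"
    and r: "is_path V E r" "set r = set p \<union> set q"
  shows False
proof -
  note repl = replace_components[of Q "{p, q}" "{r}"]
  have "path_partition V E ((Q - {p, q}) \<union> {r})"
    and "card ((Q - {p, q}) \<union> {r}) + 2 = card Q + 1"
    using min pq r repl(1,2) unfolding min_partition_def by auto
  then show False using min unfolding min_partition_def by fastforce
qed

lemma max_cycle_partition_no_worse:
  assumes "max_cycle_partition Q" "path_partition V E Q'" "card Q' \<le> card Q"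
    "num_cycle_components E Q \<le> num_cycle_components E Q'"
  shows "max_cycle_partition Q'"
  using assms unfolding max_cycle_partition_def min_partition_def by (meson order_trans)

lemma optimal_partition_no_worse:
  assumes "optimal_partition Q" "max_cycle_partition Q'" "num_isolated Q' \<le> num_isolated Q"
  shows "optimal_partition Q'"
  using assms unfolding optimal_partition_def by (meson order_trans)

lemma optimal_partition_no_split:
  assumes opt: "optimal_partition Q" and v: "[v] \<in> Q" and p: "p \<in> Q" "p \<noteq> [v]"
    and not_cycle: "\<not> cycle_component E p"
    and q: "is_path V E q1" "is_path V E q2" "set q1 \<inter> set q2 = {}"
      "set q1 \<union> set q2 = insert v (set p)" "2 \<le> length q1" "2 \<le> length q2"
  shows False
proof -
  define Q' where "Q' = (Q - {[v], p}) \<union> {q1, q2}"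
  have pp: "path_partition V E Q" by (rule optimal_partition_path_partition[OF opt])
  have "q1 \<noteq> q2" using q(1,3) unfolding is_path_def by auto
  have R: "{[v], p} \<subseteq> Q" using v p by blast
  have S: "\<forall>s\<in>{q1, q2}. is_path V E s"
    "\<forall>s\<in>{q1, q2}. \<forall>t\<in>{q1, q2}. s \<noteq> t \<longrightarrow> set s \<inter> set t = {}"
    "(\<Union>s\<in>{q1, q2}. set s) = (\<Union>r\<in>{[v], p}. set r)"
    using q by auto
  have fin: "finite {q1, q2}" by simp
  note repl = replace_components[OF pp R fin S, folded Q'_def]
  have no_cycle_removed: "{r \<in> {[v], p}. cycle_component E r} = {}"
    using not_cycle unfolding cycle_component_def by auto
  have no_isolated_added: "{s \<in> {q1, q2}. isolated_vertex s} = {}"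
    using q(5,6) unfolding isolated_vertex_def by auto
  have pp': "path_partition V E Q'" by (rule repl(1))
  have "max_cycle_partition Q" using opt unfolding optimal_partition_def by blast
  moreover have "card Q' \<le> card Q" using repl(2) \<open>q1 \<noteq> q2\<close> p(2) by simp
  moreover have "num_cycle_components E Q \<le> num_cycle_components E Q'"
    using repl(3)[where F = "cycle_component E"]
    unfolding num_cycle_components_def no_cycle_removed by simp
  ultimately have "max_cycle_partition Q'" using pp' by (blast intro: max_cycle_partition_no_worse)
  then have "num_isolated Q \<le> num_isolated Q'" using opt unfolding optimal_partition_def by blast
  moreover have "num_isolated Q' + card {r \<in> {[v], p}. isolated_vertex r} = num_isolated Q"
    using repl(3)[where F = isolated_vertex]
    unfolding num_isolated_def no_isolated_added by simp
  moreover have "card {r \<in> {[v], p}. isolated_vertex r} \<noteq> 0"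
    unfolding isolated_vertex_def by auto
  ultimately show False by linarith
qed

lemma optimal_partition_neighbour_of_isolated:
  assumes opt: "optimal_partition Q" and v: "[v] \<in> Q" and vu: "E v u"
  shows "\<exists>a b. [a, u, b] \<in> Q \<and> \<not> E a b"
proof -
  have pp: "path_partition V E Q" by (rule optimal_partition_path_partition[OF opt])
  have min: "min_partition Q"
    using opt unfolding optimal_partition_def max_cycle_partition_def by blast
  have uv: "u \<in> V" "v \<in> V" "u \<noteq> v" using edge_in_V[OF vu] irrefl vu by auto
  obtain p where p: "p \<in> Q" "u \<in> set p" using pp uv(1) unfolding path_partition_def by blast
  have "p \<noteq> [v]" using p(2) uv(3) by auto
  then have v_notin: "v \<notin> set p" using path_partition_component_eq[OF pp p(1) v] by auto
  have path: "is_path V E p" using pp p(1) unfolding path_partition_def by blast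
  have no_merge: False if "is_path V E q" "set q = insert v (set p)" for q
    using min_partition_no_merge[OF min p(1) v \<open>p \<noteq> [v]\<close> that(1)] that(2) by simp
  show ?thesis
  proof (cases "cycle_component E p")
    case True
    then obtain q where q: "distinct (u # q)" "set (u # q) = set p" "successively E (u # q)"
      using spanning_cycle_path_from[OF _ p(2)] unfolding cycle_component_def by blast
    have "is_path V E (v # u # q)"
      using q vu v_notin uv path unfolding is_path_iff_successively by auto
    then show ?thesis using no_merge q(2) by fastforce
  next
    case False
    from path_absorb_neighbour[OF sym path p(2) uv(2) v_notin vu] show ?thesis
    proof (elim disjE exE conjE)
      fix q assume "is_path V E q" "set q = insert v (set p)"
      then show ?thesis using no_merge by blast
    next
      fix q1 q2 assume "is_path V E q1" "is_path V E q2" "set q1 \<inter> set q2 = {}"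
        "set q1 \<union> set q2 = insert v (set p)" "2 \<le> length q1" "2 \<le> length q2"
      then show ?thesis
        using optimal_partition_no_split[OF opt v p(1) \<open>p \<noteq> [v]\<close> False] by blast
    next
      fix a b assume p_eq: "p = [a, u, b]"
      have "\<not> E a b"
        using False path cycle_component_triple_iff[OF sym, of a u b]
        unfolding p_eq is_path_iff_successively by auto
      then show ?thesis using p(1) p_eq by blast
    qed
  qed
qed

definition open_middles :: "'a list set \<Rightarrow> 'a set" where
  "open_middles Q = {u. \<exists>a b. [a, u, b] \<in> Q \<and> \<not> E a b}"

lemma optimal_partition_swap:
  assumes opt: "optimal_partition Q" and z: "[z] \<in> Q" "E z u"
    and p: "p \<in> Q" "p = [a, u, b] \<or> p = [b, u, a]" and ab: "\<not> E a b"
  defines "Q' \<equiv> (Q - {[z], p}) \<union> {[a], [z, u, b]}"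
  shows "optimal_partition Q'" and "open_middles Q' = open_middles Q"
proof -
  have pp: "path_partition V E Q" by (rule optimal_partition_path_partition[OF opt])
  have path: "is_path V E p" using pp p(1) unfolding path_partition_def by blast
  have dist: "distinct [a, u, b]" and au: "E a u" and ub: "E u b"
    using path p(2) sym unfolding is_path_iff_successively by auto
  have "z \<notin> set p" using path_partition_component_eq[OF pp p(1) z(1)] p(2) by auto
  then have z_new: "z \<noteq> a" "z \<noteq> u" "z \<noteq> b" using p(2) by auto
  have in_V: "a \<in> V" "u \<in> V" "b \<in> V" "z \<in> V" using edge_in_V au ub z(2) by auto
  have R: "{[z], p} \<subseteq> Q" using z(1) p(1) by blast
  have S: "\<forall>s\<in>{[a], [z, u, b]}. is_path V E s"
    "\<forall>s\<in>{[a], [z, u, b]}. \<forall>t\<in>{[a], [z, u, b]}. s \<noteq> t \<longrightarrow> set s \<inter> set t = {}"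
    "(\<Union>s\<in>{[a], [z, u, b]}. set s) = (\<Union>r\<in>{[z], p}. set r)"
    using in_V dist z_new z(2) ub p(2) unfolding is_path_iff_successively by auto
  have fin: "finite {[a], [z, u, b]}" by simp
  note repl = replace_components[OF pp R fin S, folded Q'_def]
  have p_open: "\<not> cycle_component E p"
    using p(2) ab sym cycle_component_triple_iff[OF sym dist]
      cycle_component_triple_iff[OF sym, of b u a] dist by auto
  have no_cycle_removed: "{r \<in> {[z], p}. cycle_component E r} = {}"
    using p_open unfolding cycle_component_def by auto
  have cycles_added: "{s \<in> {[a], [z, u, b]}. cycle_component E s}
      = (if E z b then {[z, u, b]} else {})"
    using cycle_component_triple_iff[OF sym, of z u b] dist z_new z(2) ub
    unfolding cycle_component_def by auto
  have "{r \<in> {[z], p}. isolated_vertex r} = {[z]}" "{s \<in> {[a], [z, u, b]}. isolated_vertex s} = {[a]}"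
    using p(2) unfolding isolated_vertex_def by auto
  then have same_isolated: "num_isolated Q' = num_isolated Q"
    using repl(3)[where F = isolated_vertex] unfolding num_isolated_def by simp
  have mcQ: "max_cycle_partition Q" using opt unfolding optimal_partition_def by blast
  have pp': "path_partition V E Q'" by (rule repl(1))
  have card': "card Q' \<le> card Q" using repl(2) p(2) by auto
  have cycles': "num_cycle_components E Q' = num_cycle_components E Q + (if E z b then 1 else 0)"
    using repl(3)[where F = "cycle_component E"]
    unfolding num_cycle_components_def no_cycle_removed cycles_added by simp
  then have mcQ': "max_cycle_partition Q'"
    using max_cycle_partition_no_worse[OF mcQ pp' card'] by simp
  show "optimal_partition Q'"
    using optimal_partition_no_worse[OF opt mcQ'] same_isolated by simp
  have "num_cycle_components E Q' \<le> num_cycle_components E Q"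
    using mcQ mcQ' unfolding max_cycle_partition_def by blast
  then have zb: "\<not> E z b" using cycles' by (auto split: if_splits)
  have u_open: "u \<in> open_middles Q" "u \<in> open_middles Q'"
    using p ab zb sym unfolding open_middles_def Q'_def by blast+
  have "x \<in> open_middles Q \<longleftrightarrow> x \<in> open_middles Q'" if "x \<noteq> u" for x
    using that p(2) unfolding open_middles_def Q'_def by auto
  with u_open show "open_middles Q' = open_middles Q" by (metis set_eqI)
qed

end

locale optimal_sgraph = sgraph +
  fixes P :: "'a list set"
  assumes optimal: "optimal_partition P"
begin

text \<open>Vertices that are isolated in some optimal partition reachable from P by n rounds of
the swap above.\<close>

primrec isolable :: "nat \<Rightarrow> 'a set" where
  "isolable 0 = {y. [y] \<in> P}"
| "isolable (Suc n) = isolable n \<union>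
    {c. \<exists>y u a b. y \<in> isolable n \<and> E y u \<and> [a, u, b] \<in> P \<and> \<not> E a b \<and> c \<in> {a, b}}"

lemma isolable_mono: "isolable n \<subseteq> isolable (Suc n)"
  by auto

text \<open>The last conjunct keeps the swap available: an open 3-path of P is still a component of
the witness unless both of its ends are already isolable.\<close>

lemma isolable_witness:
  assumes "y \<in> isolable n"
  shows "\<exists>Q. optimal_partition Q \<and> open_middles Q = open_middles P \<and> [y] \<in> Q
    \<and> (\<forall>a u b. [a, u, b] \<in> P \<longrightarrow> \<not> E a b \<longrightarrow> [a, u, b] \<in> Q \<or> a \<in> isolable n \<and> b \<in> isolable n)"
  using assms
proof (induction n arbitrary: y)
  case 0
  then show ?case using optimal by auto
next
  case (Suc n)
  show ?case
  proof (cases "y \<in> isolable n")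
    case True
    then show ?thesis using Suc.IH isolable_mono by blast
  next
    case False
    then obtain y0 u a b where y0: "y0 \<in> isolable n" "E y0 u"
      and abP: "[a, u, b] \<in> P" "\<not> E a b" and y: "y \<in> {a, b}"
      using Suc.prems by auto
    obtain Q where opt: "optimal_partition Q" and mid: "open_middles Q = open_middles P"
      and y0Q: "[y0] \<in> Q"
      and kept: "\<forall>a u b. [a, u, b] \<in> P \<longrightarrow> \<not> E a b \<longrightarrow> [a, u, b] \<in> Q \<or> a \<in> isolable n \<and> b \<in> isolable n"
      using Suc.IH[OF y0(1)] by blast
    have abQ: "[a, u, b] \<in> Q" using kept abP y False by auto
    define c where "c = (if y = a then b else a)"
    have orient: "[a, u, b] = [y, u, c] \<or> [a, u, b] = [c, u, y]" and yc: "\<not> E y c"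
      using y abP(2) sym unfolding c_def by auto
    define Q' where "Q' = (Q - {[y0], [a, u, b]}) \<union> {[y], [y0, u, c]}"
    note swap = optimal_partition_swap[OF opt y0Q y0(2) abQ orient yc, folded Q'_def]
    have "a \<in> isolable (Suc n)" "b \<in> isolable (Suc n)" using y0 abP by auto
    moreover have "[a', u', b'] \<in> Q'" if "[a', u', b'] \<in> Q" "[a', u', b'] \<noteq> [a, u, b]" for a' u' b'
      using that unfolding Q'_def by auto
    ultimately have "\<forall>a' u' b'. [a', u', b'] \<in> P \<longrightarrow> \<not> E a' b' \<longrightarrow>
        [a', u', b'] \<in> Q' \<or> a' \<in> isolable (Suc n) \<and> b' \<in> isolable (Suc n)"
      using kept isolable_mono by blast
    moreover have "[y] \<in> Q'" unfolding Q'_def by simp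
    ultimately show ?thesis using swap mid by auto
  qed
qed

lemma isolable_neighbour:
  assumes "y \<in> isolable n" "E y u"
  shows "\<exists>a b. [a, u, b] \<in> P \<and> \<not> E a b \<and> a \<in> isolable (Suc n) \<and> b \<in> isolable (Suc n)"
proof -
  obtain Q where Q: "optimal_partition Q" "open_middles Q = open_middles P" "[y] \<in> Q"
    using isolable_witness[OF assms(1)] by blast
  have "u \<in> open_middles Q"
    using optimal_partition_neighbour_of_isolated[OF Q(1,3) assms(2)] unfolding open_middles_def by auto
  then obtain a b where "[a, u, b] \<in> P" "\<not> E a b" using Q(2) unfolding open_middles_def by auto
  moreover have "a \<in> isolable (Suc n)" "b \<in> isolable (Suc n)"
    using calculation assms by auto
  ultimately show ?thesis by blast
qed

lemma isolable_subset: "isolable n \<subseteq> V"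
proof (induction n)
  case 0
  show ?case
    using optimal_partition_path_partition[OF optimal] unfolding path_partition_def by fastforce
next
  case (Suc n)
  have "set [a, u, b] \<subseteq> V" if "[a, u, b] \<in> P" for a u b
    using that optimal_partition_path_partition[OF optimal] unfolding path_partition_def by blast
  then show ?case using Suc by auto
qed

lemma optimal_partition_no_isolated:
  assumes reg: "regular V E d" and d: "1 \<le> d"
  shows "\<forall>p\<in>P. \<not> isolated_vertex p"
proof (rule ccontr)
  assume "\<not> ?thesis"
  then obtain v0 where v0: "[v0] \<in> P"
    unfolding isolated_vertex_def by (auto simp: length_Suc_conv)
  define Y where "Y = (\<Union>n. isolable n)"
  define N where "N = {u. \<exists>y\<in>Y. E y u}"
  have fin_Y: "finite Y" using isolable_subset finite_V unfolding Y_def by (meson UN_least finite_subset)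
  have N_V: "N \<subseteq> V" using edge_in_V unfolding N_def by blast
  then have fin_N: "finite N" using finite_V finite_subset by blast
  have "\<forall>u\<in>N. \<exists>a b. [a, u, b] \<in> P \<and> a \<in> Y \<and> b \<in> Y"
    using isolable_neighbour unfolding N_def Y_def by blast
  moreover have singletons_Y: "{y. [y] \<in> P} \<subseteq> Y" unfolding Y_def using isolable.simps(1) by blast
  ultimately have "card {y. [y] \<in> P} + 2 * card N \<le> card Y"
    using path_partition_card_singletons_middles_le[OF optimal_partition_path_partition[OF optimal]]
      fin_Y fin_N by blast
  moreover have "card {y. [y] \<in> P} \<noteq> 0"
    using v0 finite_subset[OF singletons_Y fin_Y] by auto
  ultimately have less: "card N < card Y" by linarith
  have "card {u \<in> N. E y u} = d" if "y \<in> Y" for y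
  proof -
    have "y \<in> V" using that isolable_subset unfolding Y_def by blast
    moreover have "{u \<in> N. E y u} = {u \<in> V. E y u}" using that edge_in_V unfolding N_def by blast
    ultimately show ?thesis using reg unfolding regular_def by simp
  qed
  moreover have "card {y \<in> Y. E y u} \<le> d" if "u \<in> N" for u
  proof -
    have "{y \<in> Y. E y u} \<subseteq> {y \<in> V. E u y}" using sym edge_in_V by blast
    then have "card {y \<in> Y. E y u} \<le> card {y \<in> V. E u y}" using finite_V by (intro card_mono) auto
    also have "\<dots> = d" using reg that N_V unfolding regular_def by blast
    finally show ?thesis .
  qed
  ultimately have "d * card Y \<le> d * card N" using double_counting_le[OF fin_Y fin_N] by blast
  then show False using less d by simp
qed

end

theorem lemma6:
  fixes V :: "'a set" and E :: "'a \<Rightarrow> 'a \<Rightarrow> bool" and d :: nat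
  assumes "1 \<le> d"
    and "simple_graph V E"
    and "regular V E d"
  shows "\<exists>P. canonical_path_partition V E P"
proof -
  interpret sgraph V E by unfold_locales (rule assms(2))
  obtain P where P: "optimal_partition P" using ex_optimal_partition by blast
  interpret optimal_sgraph V E P by unfold_locales (rule P)
  have "\<forall>p\<in>P. \<not> isolated_vertex p" by (rule optimal_partition_no_isolated[OF assms(3,1)])
  then show ?thesis using optimal_partition_canonical[OF P] by blast
qed

end
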